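(* $$\liminf_{n\to\infty}\frac{a(n)}{n}=\frac{\varphi+2}{5}\qquad\text{and}\qquad \limsup_{n\to\infty}\frac{a(n)}{n}=\varphi .$$
   Context: $\varphi=(1+\sqrt5)/2$. Let $(F_n)_{n\ge 0}$ be the Fibonacci numbers: $F_0=0$, $F_1=1$, $F_n=F_{n-1}+F_{n-2}$ for $n\ge 2$. Define $(a(n))_{n\ge 0}$ (OEIS A105774) by $a(0)=0$, $a(1)=1$, and for $n\ge 2$, $a(n)=F_{j+1}-a(n-F_j)$, where $j\ge 2$ is the unique index with $F_j<n\le F_{j+1}$. *)

theory Defs
  imports "HOL-Analysis.Analysis" "HOL-Number_Theory.Fib"
begin

definition phi :: real where "phi = (1 + sqrt 5) / 2"

definition fidx :: "nat \<Rightarrow> nat" where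
  "fidx n = (THE j. 2 \<le> j \<and> fib j < n \<and> n \<le> fib (Suc j))"

(* OEIS A105774. The guard "0 < fib (fidx n) \<and> fib (fidx n) < n" always holds
   for n \<ge> 2 (fidx n \<ge> 2); it only serves to make termination evident. *)
function A105774 :: "nat \<Rightarrow> int" where
  "A105774 n = (if n \<le> 1 then int n
     else if 0 < fib (fidx n) \<and> fib (fidx n) < n
       then int (fib (Suc (fidx n))) - A105774 (n - fib (fidx n))
       else 0)"
  by auto
termination by (relation "Wellfounded.measure id") auto

end

theory Submission
  imports Defs
begin

(*
  Write n = F_j + m with m \<le> F_{j-1}. Unfolding the recursion twice gives
  a(n) = F_{j+1} - F_{k+1} + a(m - F_k), where k = fidx m \<le> j - 2, and
  F_{j+1} - F_{k+1} \<ge> F_j \<ge> c (F_j + F_{j-2}) \<ge> c (F_j + F_k) as soon as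
  c < lim F_j / (F_j + F_{j-2}) = (\<phi> + 2) / 5 and j is large. So a(n) \<ge> c n - O(1),
  i.e. the liminf is at least (\<phi> + 2) / 5, and it is attained along n = F_{2k+1},
  where a(n) = F_{k+1}^2 and n = F_k^2 + F_{k+1}^2.
  Conversely 0 \<le> a(n) \<le> F_{j+1} < F_{j+1} n / F_j bounds the limsup by \<phi>, which is
  attained along n = F_{j+2} + 1, where a(n) = F_{j+3} - 1.
*)

declare A105774.simps [simp del]

lemma fib_Suc_eq: "0 < j \<Longrightarrow> fib (Suc j) = fib j + fib (j - 1)"
  by (cases j) simp_all

lemma fidx_eq:
  assumes "2 \<le> j" "fib j < n" "n \<le> fib (Suc j)"
  shows "fidx n = j"
  unfolding fidx_def
proof (rule the_equality)
  fix i assume i: "2 \<le> i \<and> fib i < n \<and> n \<le> fib (Suc i)"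
  show "i = j"
  proof (rule ccontr)
    assume "i \<noteq> j"
    then consider "Suc i \<le> j" | "Suc j \<le> i" by linarith
    then show False
      by cases (use i assms fib_mono in \<open>fastforce+\<close>)
  qed
qed (use assms in auto)

lemma fidx_exists: "2 \<le> n \<Longrightarrow> \<exists>j. 2 \<le> j \<and> fib j < n \<and> n \<le> fib (Suc j)"
proof (induction n rule: dec_induct)
  case base
  show ?case by (intro exI[of _ 2]) (simp add: numeral_2_eq_2)
next
  case (step n)
  then obtain j where j: "2 \<le> j" "fib j < n" "n \<le> fib (Suc j)" by blast
  show ?case
  proof (cases "Suc n \<le> fib (Suc j)")
    case True
    with j show ?thesis by auto
  next
    case False
    with j have "n = fib (Suc j)" by simp
    with j fib_neq_0_nat[of j] show ?thesis by (intro exI[of _ "Suc j"]) auto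
  qed
qed

lemma fidx_bounds:
  assumes "2 \<le> n"
  shows "2 \<le> fidx n" "fib (fidx n) < n" "n \<le> fib (Suc (fidx n))"
  using fidx_exists[OF assms] fidx_eq by auto

lemma less_fidx:
  assumes "fib (Suc i) < n"
  shows "i < fidx n"
proof -
  have "2 \<le> n" using assms fib_neq_0_nat[of "Suc i"] by linarith
  with assms have "fib (Suc i) < fib (Suc (fidx n))" using fidx_bounds(3) by fastforce
  then show ?thesis using fib_mono[of "Suc (fidx n)" "Suc i"] by (meson not_le Suc_le_mono)
qed

lemma diff_fib_fidx_le:
  assumes "2 \<le> n"
  shows "n - fib (fidx n) \<le> fib (fidx n - 1)"
  using fidx_bounds[OF assms] fib_Suc_eq[of "fidx n"] by simp

lemma A105774_0: "A105774 0 = 0"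
  by (simp add: A105774.simps)

lemma A105774_1: "A105774 1 = 1"
  by (simp add: A105774.simps)

lemma A105774_rec:
  assumes "2 \<le> n"
  shows "A105774 n = int (fib (Suc (fidx n))) - A105774 (n - fib (fidx n))"
  using assms fidx_bounds[OF assms] fib_neq_0_nat[of "fidx n"]
  by (subst A105774.simps) auto

(* The upper bound 2 n only serves as induction invariant: with m \<le> F_{j-1} it keeps
   a(n) = F_{j+1} - a(m) nonnegative. *)
lemma A105774_between: "0 \<le> A105774 n \<and> A105774 n \<le> 2 * int n"
proof (induction n rule: less_induct)
  case (less n)
  show ?case
  proof (cases "n \<le> 1")
    case True
    then show ?thesis using A105774_0 A105774_1 by (cases n) auto
  next
    case False
    then have n: "2 \<le> n" by simp
    define j m where "j = fidx n" and "m = n - fib j"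
    have j: "2 \<le> j" "fib j < n" "n \<le> fib (Suc j)"
      using fidx_bounds[OF n] unfolding j_def by auto
    have m: "m \<le> fib (j - 1)" "m < n"
      using diff_fib_fidx_le[OF n] j fib_neq_0_nat[of j] unfolding m_def j_def by auto
    have "fib (j - 1) \<le> fib j" by (rule fib_mono) simp
    then have "2 * fib (j - 1) \<le> fib (Suc j)" and "fib (Suc j) \<le> 2 * fib j"
      using fib_Suc_eq[of j] j(1) by simp_all
    moreover have "A105774 n = int (fib (Suc j)) - A105774 m"
      using A105774_rec[OF n] unfolding j_def m_def .
    ultimately show ?thesis using less[OF m(2)] m j by linarith
  qed
qed

lemma A105774_nonneg: "0 \<le> A105774 n"
  using A105774_between by blast

lemma A105774_le_fib_Suc_fidx:
  assumes "2 \<le> n"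
  shows "A105774 n \<le> int (fib (Suc (fidx n)))"
  using A105774_rec[OF assms] A105774_nonneg[of "n - fib (fidx n)"] by simp

lemma A105774_two_steps:
  assumes n: "2 \<le> n" and m: "m = n - fib (fidx n)" "2 \<le> m"
  shows "fidx m + 2 \<le> fidx n"
    and "A105774 n = int (fib (Suc (fidx n))) - int (fib (Suc (fidx m)))
                       + A105774 (m - fib (fidx m))"
proof -
  have "fib (fidx m) < fib (fidx n - 1)"
    using fidx_bounds(2)[OF m(2)] diff_fib_fidx_le[OF n] m(1) by simp
  then have "fidx m < fidx n - 1"
    by (meson fib_mono not_le)
  then show "fidx m + 2 \<le> fidx n" by simp
  show "A105774 n = int (fib (Suc (fidx n))) - int (fib (Suc (fidx m)))
                       + A105774 (m - fib (fidx m))"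
    using A105774_rec[OF n] A105774_rec[OF m(2)] m(1) by simp
qed

lemma A105774_fib_plus_1:
  assumes "2 \<le> j"
  shows "A105774 (fib j + 1) = int (fib (Suc j)) - 1"
proof -
  have "0 < fib j" "0 < fib (j - 1)"
    using assms fib_neq_0_nat by simp_all
  then have "fidx (fib j + 1) = j"
    using assms fib_Suc_eq[of j] by (intro fidx_eq) simp_all
  moreover have "2 \<le> fib j + 1" using \<open>0 < fib j\<close> by simp
  ultimately show ?thesis using A105774_rec A105774_1 by simp
qed

lemma A105774_descent:
  fixes c :: real
  assumes "0 \<le> c" and n: "2 \<le> n" and m: "m = n - fib (fidx n)" "2 \<le> m"
    and gap: "c * (fib (fidx n) + fib (fidx n - 2)) \<le> fib (fidx n)"
  obtains m' where "m' < n" "c * n - A105774 n \<le> c * m' - A105774 m'"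
proof
  define j k where "j = fidx n" and "k = fidx m"
  have k: "k + 2 \<le> j"
    and rec: "A105774 n = int (fib (Suc j)) - int (fib (Suc k)) + A105774 (m - fib k)"
    using A105774_two_steps[OF n m] unfolding j_def k_def by auto
  have j: "2 \<le> j" "fib j < n" and "fib k < m"
    using fidx_bounds n m(2) unfolding j_def k_def by auto
  then show "m - fib k < n"
    using m(1) fib_neq_0_nat[of j] unfolding j_def by simp
  have "fib (Suc k) \<le> fib (j - 1)" "fib k \<le> fib (j - 2)"
    using k by (simp_all add: fib_mono)
  then have "c * (fib j + fib k) \<le> c * (fib j + fib (j - 2))"
    using \<open>0 \<le> c\<close> by (intro mult_left_mono) simp_all
  also have "\<dots> \<le> real (fib (Suc j)) - real (fib (Suc k))"
    using gap \<open>fib (Suc k) \<le> fib (j - 1)\<close> fib_Suc_eq[of j] j(1)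
    unfolding j_def by simp
  finally show "c * n - A105774 n \<le> c * (m - fib k) - A105774 (m - fib k)"
    using rec m(1) j(2) \<open>fib k < m\<close> unfolding j_def by (simp add: algebra_simps)
qed

lemma A105774_ge_linear:
  fixes c :: real
  assumes "0 \<le> c" and gap: "\<And>j. J \<le> j \<Longrightarrow> c * (fib j + fib (j - 2)) \<le> fib j"
  shows "c * n - c * fib (Suc J) \<le> A105774 n"
proof (induction n rule: less_induct)
  case (less n)
  show ?case
  proof (cases "n \<le> fib (Suc J)")
    case True
    then have "c * n \<le> c * fib (Suc J)"
      using \<open>0 \<le> c\<close> by (intro mult_left_mono) simp_all
    then show ?thesis using A105774_nonneg[of n] by simp
  next
    case False
    have J: "0 < fib (Suc J)" by (simp add: fib_neq_0_nat)
    with False have n: "2 \<le> n" by linarith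
    define j where "j = fidx n"
    have j: "2 \<le> j" "fib j < n" "J \<le> j"
      using fidx_bounds[OF n] less_fidx[of J n] False unfolding j_def by auto
    note gap_j = gap[OF j(3)]
    consider "n = fib j + 1" | "2 \<le> n - fib j" using j(2) by linarith
    then show ?thesis
    proof cases
      case 1
      have "c * fib j \<le> c * (fib j + fib (j - 2))"
        using \<open>0 \<le> c\<close> by (intro mult_left_mono) simp_all
      with gap_j have "c * fib j \<le> fib j" by linarith
      moreover have "c \<le> c * fib (Suc J)"
        using J \<open>0 \<le> c\<close> by (simp add: mult_le_cancel_left1)
      moreover have "fib j + 1 \<le> fib (Suc j)"
        using fib_Suc_eq[of j] fib_neq_0_nat[of "j - 1"] j(1) by simp
      ultimately show ?thesis
        using 1 A105774_fib_plus_1[OF j(1)] by (simp add: algebra_simps)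
    next
      case 2
      then obtain m' where "m' < n" "c * n - A105774 n \<le> c * m' - A105774 m'"
        using A105774_descent[OF \<open>0 \<le> c\<close> n refl] gap_j unfolding j_def by blast
      with less show ?thesis by fastforce
    qed
  qed
qed

lemma phi_gt_1: "1 < phi"
  unfolding phi_def by simp

lemma phi_squared: "phi\<^sup>2 = phi + 1"
  unfolding phi_def by (simp add: power2_eq_square field_simps)

lemma one_div_one_plus_inverse_phi_squared: "1 / (1 + (1 / phi)\<^sup>2) = (phi + 2) / 5"
proof -
  have "1 / (1 + (1 / phi)\<^sup>2) = phi\<^sup>2 / (phi\<^sup>2 + 1)"
    using phi_gt_1 by (simp add: field_simps power2_eq_square)
  also have "\<dots> = (phi + 1) / (phi + 2)"
    using phi_squared by simp
  also have "\<dots> = (phi + 2) / 5"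
  proof -
    have "(phi + 2) * (phi + 2) = 5 * (phi + 1)"
      using phi_squared by (simp add: power2_eq_square algebra_simps)
    then show ?thesis using phi_gt_1 by (simp add: field_simps)
  qed
  finally show ?thesis .
qed

lemma fib_ratio_tendsto: "(\<lambda>n. real (fib n) / real (fib (n + d))) \<longlonglongrightarrow> (1 / phi) ^ d"
proof -
  define u where "u n = real (fib n) / (phi ^ n / sqrt 5)" for n
  have u: "u \<longlonglongrightarrow> 1"
    unfolding u_def phi_def by (rule fib_asymptotics)
  have "(\<lambda>n. u n / u (n + d) / phi ^ d) \<longlonglongrightarrow> 1 / 1 / phi ^ d"
    using phi_gt_1 by (intro tendsto_intros u LIMSEQ_ignore_initial_segment) auto
  moreover have "u n / u (n + d) / phi ^ d = real (fib n) / real (fib (n + d))" for n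
    using phi_gt_1 unfolding u_def by (simp add: field_simps power_add)
  ultimately show ?thesis by (simp add: power_one_over)
qed

lemma fib_Suc_ratio_tendsto: "(\<lambda>n. real (fib (Suc n)) / real (fib n)) \<longlonglongrightarrow> phi"
proof -
  have "(\<lambda>n. 1 / (real (fib n) / real (fib (n + 1)))) \<longlonglongrightarrow> 1 / ((1 / phi) ^ 1)"
    using phi_gt_1 by (intro tendsto_intros fib_ratio_tendsto) auto
  then show ?thesis by simp
qed

lemma A105774_linear_lower_bound:
  assumes "c < (phi + 2) / 5"
  shows "\<exists>B. \<forall>n. c * real n - B \<le> real_of_int (A105774 n)"
proof -
  define c' where "c' = max c 0"
  have "(\<lambda>j. 1 / (1 + real (fib j) / real (fib (j + 2)))) \<longlonglongrightarrow> 1 / (1 + (1 / phi)\<^sup>2)"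
    by (intro tendsto_intros fib_ratio_tendsto) (simp add: add_nonneg_eq_0_iff)
  moreover have "1 / (1 + real (fib j) / real (fib (j + 2)))
                 = real (fib (j + 2)) / (real (fib (j + 2)) + real (fib j))" for j
    using fib_neq_0_nat[of "j + 2"] by (simp add: field_simps del: fib.simps)
  moreover have "c' < (phi + 2) / 5"
    using assms phi_gt_1 unfolding c'_def by simp
  ultimately have "\<forall>\<^sub>F j in sequentially.
      c' < real (fib (j + 2)) / (real (fib (j + 2)) + real (fib j))"
    using one_div_one_plus_inverse_phi_squared by (auto intro: order_tendstoD(1))
  then obtain J where J: "\<And>j. J \<le> j \<Longrightarrow>
      c' < real (fib (j + 2)) / (real (fib (j + 2)) + real (fib j))"
    unfolding eventually_sequentially by blast
  have "c' * (fib j + fib (j - 2)) \<le> fib j" if "J + 2 \<le> j" for j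
  proof -
    have "c' < real (fib j) / (real (fib j) + real (fib (j - 2)))"
      using J[of "j - 2"] that by (simp add: Suc_diff_Suc numeral_2_eq_2 del: fib.simps)
    moreover have "0 < real (fib j) + real (fib (j - 2))"
      using that fib_neq_0_nat[of j] by simp
    ultimately show ?thesis by (simp add: field_simps)
  qed
  then have "c' * n - c' * fib (Suc (J + 2)) \<le> A105774 n" for n
    by (intro A105774_ge_linear) (simp_all add: c'_def)
  moreover have "c * n \<le> c' * n" for n :: nat
    unfolding c'_def by (simp add: mult_right_mono)
  ultimately show ?thesis by (meson order_trans diff_right_mono)
qed

lemma A105774_fib_odd: "A105774 (fib (Suc (2 * k))) = int (fib (Suc k)) ^ 2"
proof (induction k)
  case 0
  then show ?case using A105774_1 by simp
next
  case (Suc k)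
  define n where "n = fib (Suc (Suc (Suc (2 * k))))"
  have n_eq: "n = fib (Suc (Suc (2 * k))) + fib (Suc (2 * k))"
    unfolding n_def by simp
  have pos: "0 < fib (Suc (2 * k))" by (simp add: fib_neq_0_nat)
  have "fidx n = Suc (Suc (2 * k))"
    by (rule fidx_eq) (use n_eq pos in \<open>auto simp: n_def\<close>)
  moreover have "2 \<le> n" using n_eq pos fib_neq_0_nat[of "Suc (Suc (2 * k))"] by linarith
  ultimately have "A105774 n = int n - A105774 (fib (Suc (2 * k)))"
    using A105774_rec[of n] n_eq by (simp add: n_def)
  also have "\<dots> = int (fib (Suc (Suc k))) ^ 2"
    using Suc.IH fib_rec_odd[of "Suc k"] unfolding n_def by simp
  finally show ?case unfolding n_def by simp
qed

lemma A105774_fib_odd_ratio_tendsto: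
  "(\<lambda>k. real_of_int (A105774 (fib (Suc (2 * k)))) / real (fib (Suc (2 * k))))
     \<longlonglongrightarrow> (phi + 2) / 5"
proof -
  have "(\<lambda>k. 1 / (1 + (real (fib k) / real (fib (k + 1)))\<^sup>2)) \<longlonglongrightarrow> 1 / (1 + ((1 / phi) ^ 1)\<^sup>2)"
    by (intro tendsto_intros fib_ratio_tendsto) (simp add: add_nonneg_eq_0_iff)
  moreover have "1 / (1 + (real (fib k) / real (fib (k + 1)))\<^sup>2)
      = real_of_int (A105774 (fib (Suc (2 * k)))) / real (fib (Suc (2 * k)))" for k
    using A105774_fib_odd[of k] fib_rec_odd[of k] fib_neq_0_nat[of "Suc k"]
    by (simp add: field_simps power2_eq_square)
  ultimately show ?thesis using one_div_one_plus_inverse_phi_squared by simp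
qed

lemma le_fib_Suc: "n \<le> fib (Suc n)"
proof (induction n rule: fib.induct)
  case (3 n)
  then show ?case using fib_neq_0_nat[of "Suc n"] by simp
qed simp_all

lemma one_div_fib_tendsto_0: "(\<lambda>n. 1 / real (fib n)) \<longlonglongrightarrow> 0"
proof (rule tendsto_divide_0[OF tendsto_const filterlim_at_top_imp_at_infinity])
  have "filterlim (\<lambda>n. real (fib (Suc n))) at_top sequentially"
    using le_fib_Suc by (intro filterlim_at_top_mono[OF filterlim_real_sequentially]) simp_all
  then show "filterlim (\<lambda>n. real (fib n)) at_top sequentially"
    by (rule filterlim_sequentially_Suc[THEN iffD1])
qed

lemma A105774_fib_Suc_ratio_tendsto:
  "(\<lambda>j. real_of_int (A105774 (fib (Suc (Suc j)) + 1)) / real (fib (Suc (Suc j)) + 1))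
     \<longlonglongrightarrow> phi"
proof -
  have ratio: "(\<lambda>j. real (fib (Suc (Suc (Suc j)))) / real (fib (Suc (Suc j)))) \<longlonglongrightarrow> phi"
    using LIMSEQ_ignore_initial_segment[OF fib_Suc_ratio_tendsto, of 2]
    by (simp only: add_2_eq_Suc')
  have "(\<lambda>j. (real (fib (Suc (Suc (Suc j)))) / real (fib (Suc (Suc j))) - 1 / real (fib (Suc (Suc j))))
             / (1 + 1 / real (fib (Suc (Suc j))))) \<longlonglongrightarrow> (phi - 0) / (1 + 0)"
    using ratio LIMSEQ_ignore_initial_segment[OF one_div_fib_tendsto_0, of 2]
    unfolding add_2_eq_Suc' by (intro tendsto_divide tendsto_diff tendsto_add tendsto_const) simp_all
  moreover have "(real (fib (Suc (Suc (Suc j)))) / real (fib (Suc (Suc j))) - 1 / real (fib (Suc (Suc j))))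
             / (1 + 1 / real (fib (Suc (Suc j))))
      = real_of_int (A105774 (fib (Suc (Suc j)) + 1)) / real (fib (Suc (Suc j)) + 1)" for j
  proof -
    have "(y / x - 1 / x) / (1 + 1 / x) = (y - 1) / (x + 1)" if "0 < x" for x y :: real
    proof -
      have "1 + 1 / x = (x + 1) / x" using that by (simp add: field_simps)
      then show ?thesis using that by (simp add: diff_divide_distrib[symmetric])
    qed
    moreover have "0 < real (fib (Suc (Suc j)))" by (simp add: fib_neq_0_nat del: fib.simps)
    ultimately show ?thesis using A105774_fib_plus_1[of "Suc (Suc j)"] by (simp del: fib.simps)
  qed
  ultimately show ?thesis by simp
qed

lemma liminf_le_subseq_limit:
  fixes X :: "nat \<Rightarrow> 'a :: {complete_linorder, linorder_topology}"
  assumes "strict_mono r" "(\<lambda>k. X (r k)) \<longlonglongrightarrow> l"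
  shows "liminf X \<le> l"
  using liminf_subseq_mono[OF assms(1), of X] lim_imp_Liminf[OF _ assms(2)]
  by (simp add: comp_def)

lemma limsup_ge_subseq_limit:
  fixes X :: "nat \<Rightarrow> 'a :: {complete_linorder, linorder_topology}"
  assumes "strict_mono r" "(\<lambda>k. X (r k)) \<longlonglongrightarrow> l"
  shows "l \<le> limsup X"
  using limsup_subseq_mono[OF assms(1), of X] lim_imp_Limsup[OF _ assms(2)]
  by (simp add: comp_def)

lemma le_liminf_ratio_of_linear_lower_bounds:
  fixes f :: "nat \<Rightarrow> real"
  assumes "\<And>c'. c' < c \<Longrightarrow> \<exists>B. \<forall>n. c' * real n - B \<le> f n"
  shows "ereal c \<le> liminf (\<lambda>n. ereal (f n / real n))"
  unfolding le_Liminf_iff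
proof (intro allI impI)
  fix y assume "y < ereal c"
  then obtain c'' where c'': "y < ereal c''" "c'' < c" using ereal_dense2 by force
  define c' where "c' = (c'' + c) / 2"
  obtain B where B: "\<And>n. c' * real n - B \<le> f n"
    using assms[of c'] c'' unfolding c'_def by auto
  have ratio_ge: "c' - B / real n \<le> f n / real n" if "0 < n" for n
  proof -
    have "c' - B / real n = (c' * real n - B) / real n"
      using that by (simp add: field_simps)
    also have "\<dots> \<le> f n / real n"
      using B[of n] by (simp add: divide_right_mono)
    finally show ?thesis .
  qed
  have "(\<lambda>n. c' - B / real n) \<longlonglongrightarrow> c' - 0"
    by (intro tendsto_intros tendsto_divide_0[OF tendsto_const
          filterlim_at_top_imp_at_infinity[OF filterlim_real_sequentially]])
  then have "\<forall>\<^sub>F n in sequentially. c'' < c' - B / real n"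
    by (rule order_tendstoD) (use c'' in \<open>simp add: c'_def\<close>)
  moreover have "\<forall>\<^sub>F n in sequentially. c' - B / real n \<le> f n / real n"
    using eventually_gt_at_top[of 0] by (rule eventually_mono) (rule ratio_ge)
  ultimately have "\<forall>\<^sub>F n in sequentially. ereal c'' < ereal (f n / real n)"
    by eventually_elim simp
  then show "\<forall>\<^sub>F n in sequentially. y < ereal (f n / real n)"
    by eventually_elim (use c'' in \<open>meson order.strict_trans\<close>)
qed

lemma limsup_A105774_ratio_le: "limsup (\<lambda>n. ereal (real_of_int (A105774 n) / real n)) \<le> ereal phi"
  unfolding Limsup_le_iff
proof (intro allI impI)
  fix y assume "ereal phi < y"
  then obtain z where z: "ereal z < y" "phi < z" using ereal_dense2 by force
  obtain J where J: "\<And>j. J \<le> j \<Longrightarrow> real (fib (Suc j)) / real (fib j) < z"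
    using order_tendstoD(2)[OF fib_Suc_ratio_tendsto z(2)] unfolding eventually_sequentially by blast
  have ratio_lt: "real_of_int (A105774 n) / real n < z" if "fib (Suc J) < n" for n
  proof -
    have n: "2 \<le> n" using that fib_neq_0_nat[of "Suc J"] by linarith
    define j where "j = fidx n"
    have j: "fib j < n" "0 < fib j" "J \<le> j"
      using fidx_bounds[OF n] less_fidx[OF that] fib_neq_0_nat[of j] unfolding j_def by auto
    have "real_of_int (A105774 n) / real n \<le> real_of_int (A105774 n) / real (fib j)"
      using j A105774_nonneg[of n] by (intro divide_left_mono) auto
    also have "\<dots> \<le> real (fib (Suc j)) / real (fib j)"
      using A105774_le_fib_Suc_fidx[OF n] j unfolding j_def by (intro divide_right_mono) auto
    also have "\<dots> < z" using J[OF j(3)] .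
    finally show ?thesis .
  qed
  have "\<forall>\<^sub>F n in sequentially. ereal (real_of_int (A105774 n) / real n) < ereal z"
    using eventually_gt_at_top[of "fib (Suc J)"] by (rule eventually_mono) (simp add: ratio_lt)
  then show "\<forall>\<^sub>F n in sequentially. ereal (real_of_int (A105774 n) / real n) < y"
    by eventually_elim (use z in \<open>meson order.strict_trans\<close>)
qed

theorem proposition7:
  shows "liminf (\<lambda>n. ereal (real_of_int (A105774 n) / real n)) = ereal ((phi + 2) / 5)
     \<and> limsup (\<lambda>n. ereal (real_of_int (A105774 n) / real n)) = ereal phi"
proof -
  let ?X = "\<lambda>n. ereal (real_of_int (A105774 n) / real n)"
  have odd_fibs: "strict_mono (\<lambda>k. fib (Suc (2 * k)))"
    unfolding strict_mono_Suc_iff by (simp add: fib_neq_0_nat)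
  have fibs_plus_1: "strict_mono (\<lambda>j. fib (Suc (Suc j)) + 1)"
    unfolding strict_mono_Suc_iff by (simp add: fib_neq_0_nat)
  have "ereal ((phi + 2) / 5) \<le> liminf ?X"
    by (rule le_liminf_ratio_of_linear_lower_bounds) (rule A105774_linear_lower_bound)
  moreover have "liminf ?X \<le> ereal ((phi + 2) / 5)"
    by (rule liminf_le_subseq_limit[OF odd_fibs])
       (intro tendsto_intros A105774_fib_odd_ratio_tendsto)
  moreover have "ereal phi \<le> limsup ?X"
    by (rule limsup_ge_subseq_limit[OF fibs_plus_1])
       (intro tendsto_intros A105774_fib_Suc_ratio_tendsto)
  ultimately show ?thesis
    using limsup_A105774_ratio_le by (simp add: order.antisym)
qed

end
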